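(* Let $A\subseteq B$ be commutative semirings, $S=A[x_1,\dots,x_n]$, $\rho$ a congruence on $B$, and $\sigma$ a congruence on $S$. Then $(\sqrt{\sigma/\rho})^{c}\subseteq(\sqrt{\rho})_B(Z_\rho(\sigma)(B))$.
   Context: Semirings are commutative with $0$ and $1\neq0$, $0a=0$; congruences are equivalence relations compatible with $+$ and $\cdot$. Twisted product: $(a,b)\ast(c,d)=(ac+bd,ad+bc)$, with $(a,b)^{\ast1}=(a,b)$ and $(a,b)^{\ast n}=(a,b)^{\ast(n-1)}\ast(a,b)$. For a congruence $\theta$ on a semiring $R$, $\sqrt{\theta}=\{(a,b)\in R\times R:\ (a+c,b+c)^{\ast n}\in\theta\ \text{for some}\ c\in R,\ n\geq1\}$. For $Y\subseteq B^n$ and a congruence $\theta$ on $B$, $\theta_B(Y)=\{(f,g)\in S\times S: (f(P),g(P))\in\theta\ \forall P\in Y\}$; $Z_\rho(\sigma)(B)=\{P\in B^n:(f(P),g(P))\in\rho\ \forall(f,g)\in\sigma\}$. For $f=\sum a_{i_1\cdots i_n}x_1^{i_1}\cdots x_n^{i_n}$, $g=\sum b_{i_1\cdots i_n}x_1^{i_1}\cdots x_n^{i_n}$ in $S$ and a congruence $\theta$ on $B$, write $f\equiv g\pmod\theta$ if $(a_{i_1\cdots i_n},b_{i_1\cdots i_n})\in\theta$ for all multi-indices. Define $\sqrt{\sigma/\rho}=\{(f_1,f_2)\in S\times S:\ \exists (g_1,g_2)\in\sqrt{\sigma}$ with $f_i\equiv g_i \pmod{\sqrt\rho}$, $i=1,2\}$,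 and $(\sqrt{\sigma/\rho})^{c}$ is the congruence on $S$ generated by this relation. *)

theory Defs
  imports "HOL-Library.Poly_Mapping"
begin

(* Commutative semirings: comm_semiring_1 + zero_neq_one. Polynomials in n variables are
   finitely supported maps from exponent maps (monomials) to coefficients; variables x_i, i < n. *)

type_synonym 'b mpoly = "(nat \<Rightarrow>\<^sub>0 nat) \<Rightarrow>\<^sub>0 'b"

definition subsemiring :: "'b::{comm_semiring_1,zero_neq_one} set \<Rightarrow> bool" where
  "subsemiring A \<longleftrightarrow> 0 \<in> A \<and> 1 \<in> A \<and> (\<forall>a\<in>A. \<forall>b\<in>A. a + b \<in> A \<and> a * b \<in> A)"

text \<open>The polynomial semiring S = A[x_1,...,x_n] as a subset of the polynomials over B.\<close>
definition polys :: "nat \<Rightarrow> 'b::{comm_semiring_1,zero_neq_one} set \<Rightarrow> 'b mpoly set" where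
  "polys n A = {p::'b mpoly. (\<forall>m\<in>Poly_Mapping.keys p. \<forall>i\<in>Poly_Mapping.keys (m::nat \<Rightarrow>\<^sub>0 nat). i < n) \<and> (\<forall>m. Poly_Mapping.lookup p m \<in> A)}"

text \<open>Points of B^n: functions nat \<Rightarrow> 'b vanishing outside {0..<n}.\<close>
definition points :: "nat \<Rightarrow> (nat \<Rightarrow> 'b::zero) set" where
  "points n = {P. \<forall>i\<ge>n. P i = 0}"

definition peval :: "'b::{comm_semiring_1,zero_neq_one} mpoly \<Rightarrow> (nat \<Rightarrow> 'b) \<Rightarrow> 'b" where
  "peval p P = (\<Sum>m\<in>Poly_Mapping.keys p. Poly_Mapping.lookup p m * (\<Prod>i\<in>Poly_Mapping.keys m. P i ^ Poly_Mapping.lookup m i))"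

definition congruence :: "'a::{plus,times} set \<Rightarrow> ('a \<times> 'a) set \<Rightarrow> bool" where
  "congruence C \<theta> \<longleftrightarrow> \<theta> \<subseteq> C \<times> C \<and> refl_on C \<theta> \<and> sym \<theta> \<and> trans \<theta> \<and>
     (\<forall>a b c d. (a,b) \<in> \<theta> \<longrightarrow> (c,d) \<in> \<theta> \<longrightarrow> (a + c, b + d) \<in> \<theta> \<and> (a * c, b * d) \<in> \<theta>)"

definition cong_gen :: "'a::{plus,times} set \<Rightarrow> ('a \<times> 'a) set \<Rightarrow> ('a \<times> 'a) set" where
  "cong_gen C R = \<Inter>{\<theta>. congruence C \<theta> \<and> R \<subseteq> \<theta>}"

definition twisted :: "'a::comm_semiring_1 \<times> 'a \<Rightarrow> 'a \<times> 'a \<Rightarrow> 'a \<times> 'a" where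
  "twisted x y = (fst x * fst y + snd x * snd y, fst x * snd y + snd x * fst y)"

text \<open>twpow x n for n \<ge> 1: twpow x 1 = x, twpow x n = twisted (twpow x (n-1)) x.
  (The value at 0 is the neutral element (1,0) and is never used.)\<close>
fun twpow :: "'a::comm_semiring_1 \<times> 'a \<Rightarrow> nat \<Rightarrow> 'a \<times> 'a" where
  "twpow x 0 = (1, 0)"
| "twpow x (Suc 0) = x"
| "twpow x (Suc (Suc n)) = twisted (twpow x (Suc n)) x"

definition cong_rad :: "'a::comm_semiring_1 set \<Rightarrow> ('a \<times> 'a) set \<Rightarrow> ('a \<times> 'a) set" where
  "cong_rad C \<theta> = {(a,b). a \<in> C \<and> b \<in> C \<and> (\<exists>c\<in>C. \<exists>n\<ge>1. twpow (a + c, b + c) n \<in> \<theta>)}"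

definition coeff_cong :: "'b mpoly \<Rightarrow> 'b mpoly \<Rightarrow> ('b::zero \<times> 'b) set \<Rightarrow> bool" where
  "coeff_cong f g \<theta> \<longleftrightarrow> (\<forall>m. (Poly_Mapping.lookup f m, Poly_Mapping.lookup g m) \<in> \<theta>)"

definition rad_quot :: "nat \<Rightarrow> 'b::{comm_semiring_1,zero_neq_one} set \<Rightarrow> ('b mpoly \<times> 'b mpoly) set
    \<Rightarrow> ('b \<times> 'b) set \<Rightarrow> ('b mpoly \<times> 'b mpoly) set" where
  "rad_quot n A \<sigma> \<rho> = {(f1, f2). f1 \<in> polys n A \<and> f2 \<in> polys n A \<and>
     (\<exists>g1 g2. (g1, g2) \<in> cong_rad (polys n A) \<sigma> \<and>
        coeff_cong f1 g1 (cong_rad UNIV \<rho>) \<and> coeff_cong f2 g2 (cong_rad UNIV \<rho>))}"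

definition cong_of_points :: "nat \<Rightarrow> 'b::{comm_semiring_1,zero_neq_one} set \<Rightarrow> ('b \<times> 'b) set
    \<Rightarrow> (nat \<Rightarrow> 'b) set \<Rightarrow> ('b mpoly \<times> 'b mpoly) set" where
  "cong_of_points n A \<theta> Y = {(f, g). f \<in> polys n A \<and> g \<in> polys n A \<and>
     (\<forall>P\<in>Y. (peval f P, peval g P) \<in> \<theta>)}"

definition zero_locus :: "nat \<Rightarrow> ('b \<times> 'b) set \<Rightarrow> ('b::{comm_semiring_1,zero_neq_one} mpoly \<times> 'b mpoly) set
    \<Rightarrow> (nat \<Rightarrow> 'b) set" where
  "zero_locus n \<rho> \<sigma> = {P \<in> points n. \<forall>(f, g)\<in>\<sigma>. (peval f P, peval g P) \<in> \<rho>}"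

end

theory Submission
  imports Defs
begin

text \<open>
  Pairs over a commutative semiring with the twisted product form a commutative semiring, in which
  twisted powers are ordinary powers and \<open>\<rho>\<close> becomes an ideal containing the diagonal. The
  binomial theorem there shows that the radical of a congruence is again a congruence. Evaluation
  at a point is a semiring homomorphism, so it commutes with twisted powers: if \<open>(g\<^sub>1, g\<^sub>2)\<close> lies
  in \<open>\<surd>\<sigma>\<close> and \<open>P \<in> Z\<^sub>\<rho>(\<sigma>)\<close>, then \<open>(g\<^sub>1(P), g\<^sub>2(P))\<close> lies in \<open>\<surd>\<rho>\<close>. Coefficientwise \<open>\<surd>\<rho>\<close>-congruent
  polynomials have \<open>\<surd>\<rho>\<close>-congruent values, so \<open>\<surd>(\<sigma>/\<rho>)\<close> lies in the congruence
  \<open>(\<surd>\<rho>)\<^sub>B(Z\<^sub>\<rho>(\<sigma>)(B))\<close>, which therefore contains the congruence it generates.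
\<close>

lemma congruence_refl: "congruence C \<theta> \<Longrightarrow> a \<in> C \<Longrightarrow> (a, a) \<in> \<theta>"
  by (auto simp: congruence_def refl_on_def)

lemma congruence_sym: "congruence C \<theta> \<Longrightarrow> (a, b) \<in> \<theta> \<Longrightarrow> (b, a) \<in> \<theta>"
  by (auto simp: congruence_def dest: symD)

lemma congruence_trans: "congruence C \<theta> \<Longrightarrow> (a, b) \<in> \<theta> \<Longrightarrow> (b, c) \<in> \<theta> \<Longrightarrow> (a, c) \<in> \<theta>"
  by (auto simp: congruence_def dest: transD)

lemma congruence_add: "congruence C \<theta> \<Longrightarrow> (a, b) \<in> \<theta> \<Longrightarrow> (c, d) \<in> \<theta> \<Longrightarrow> (a + c, b + d) \<in> \<theta>"
  by (auto simp: congruence_def)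

lemma congruence_mult: "congruence C \<theta> \<Longrightarrow> (a, b) \<in> \<theta> \<Longrightarrow> (c, d) \<in> \<theta> \<Longrightarrow> (a * c, b * d) \<in> \<theta>"
  by (auto simp: congruence_def)

lemma congruence_carrier_closed:
  assumes "congruence C \<theta>" "a \<in> C" "b \<in> C"
  shows "a + b \<in> C \<and> a * b \<in> C"
proof -
  have "(a + b, a + b) \<in> \<theta>" "(a * b, a * b) \<in> \<theta>"
    using assms by (simp_all add: congruence_refl congruence_add congruence_mult)
  then show ?thesis
    using assms(1) by (auto simp: congruence_def)
qed

lemma congruence_sum:
  assumes "congruence UNIV \<theta>" "\<And>i. i \<in> I \<Longrightarrow> (f i, g i) \<in> \<theta>"
  shows "(sum f I, sum g I) \<in> \<theta>"
  using assms(2)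
  by (induction I rule: infinite_finite_induct)
     (auto intro: congruence_refl[OF assms(1)] congruence_add[OF assms(1)])

lemma cong_gen_least: "congruence C \<theta> \<Longrightarrow> R \<subseteq> \<theta> \<Longrightarrow> cong_gen C R \<subseteq> \<theta>"
  unfolding cong_gen_def by blast

subsection \<open>The semiring of twisted pairs\<close>

datatype 'a tw = TW (tfst: 'a) (tsnd: 'a)

instantiation tw :: (comm_semiring_1) comm_semiring_1
begin

definition "0 = TW 0 0"
definition "1 = TW 1 0"
definition "x + y = TW (tfst x + tfst y) (tsnd x + tsnd y)"
definition "x * y = TW (tfst x * tfst y + tsnd x * tsnd y) (tfst x * tsnd y + tsnd x * tfst y)"

instance
  by standard (simp_all add: zero_tw_def one_tw_def plus_tw_def times_tw_def algebra_simps)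

end

lemma tw_plus [simp]: "TW a b + TW c d = TW (a + c) (b + d)"
  by (simp add: plus_tw_def)

lemma tw_times [simp]: "TW a b * TW c d = TW (a * c + b * d) (a * d + b * c)"
  by (simp add: times_tw_def)

lemma twpow_eq_power: "n \<ge> 1 \<Longrightarrow> twpow (a, b) n = (tfst (TW a b ^ n), tsnd (TW a b ^ n))"
proof (induction "(a, b)" n rule: twpow.induct)
  case (3 n)
  then show ?case
    by (cases "TW a b ^ Suc n") (simp add: twisted_def power_Suc2 del: power_Suc)
qed simp_all

subsection \<open>The radical of a congruence is a congruence\<close>

context
  fixes \<rho> :: "('b::comm_semiring_1 \<times> 'b) set"
  assumes cong_\<rho>: "congruence UNIV \<rho>"
begin

definition tw_in :: "'b tw \<Rightarrow> bool" where
  "tw_in x \<longleftrightarrow> (tfst x, tsnd x) \<in> \<rho>"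

definition tw_rad :: "'b tw \<Rightarrow> bool" where
  "tw_rad x \<longleftrightarrow> (\<exists>c n. n \<ge> 1 \<and> tw_in ((x + TW c c) ^ n))"

lemma cong_rad_iff_tw_rad: "(a, b) \<in> cong_rad UNIV \<rho> \<longleftrightarrow> tw_rad (TW a b)"
proof -
  have "twpow (a + c, b + c) n \<in> \<rho> \<longleftrightarrow> tw_in ((TW a b + TW c c) ^ n)" if "n \<ge> 1" for c n
    using that by (simp add: tw_in_def twpow_eq_power)
  then show ?thesis
    unfolding cong_rad_def tw_rad_def by auto
qed

lemma tw_in_diag: "tw_in (TW c c)"
  by (simp add: tw_in_def congruence_refl[OF cong_\<rho>])

lemma tw_in_add: "tw_in x \<Longrightarrow> tw_in y \<Longrightarrow> tw_in (x + y)"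
  by (cases x; cases y) (simp add: tw_in_def congruence_add[OF cong_\<rho>])

lemma tw_in_mult: "tw_in x \<Longrightarrow> tw_in (z * x)"
proof (cases x; cases z)
  fix a b c d
  assume "tw_in x" "x = TW a b" "z = TW c d"
  then have "(a, b) \<in> \<rho>" "(b, a) \<in> \<rho>"
    by (simp_all add: tw_in_def congruence_sym[OF cong_\<rho>])
  then have "(c * a + d * b, c * b + d * a) \<in> \<rho>"
    by (intro congruence_add[OF cong_\<rho>] congruence_mult[OF cong_\<rho>] congruence_refl[OF cong_\<rho>]) auto
  then show "tw_in (z * x)"
    using \<open>x = TW a b\<close> \<open>z = TW c d\<close> by (simp add: tw_in_def)
qed

lemma tw_in_sum: "(\<And>i. i \<in> I \<Longrightarrow> tw_in (f i)) \<Longrightarrow> tw_in (sum f I)"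
  by (induction I rule: infinite_finite_induct)
     (auto simp: tw_in_add tw_in_diag zero_tw_def simp del: tw.sel)

lemma tw_in_power_mono: "tw_in (x ^ n) \<Longrightarrow> n \<le> k \<Longrightarrow> tw_in (x ^ k)"
  using tw_in_mult[of "x ^ n" "x ^ (k - n)"] by (simp add: power_add[symmetric])

lemma tw_in_power_add:
  assumes "tw_in (x ^ n)" "tw_in (y ^ m)"
  shows "tw_in ((x + y) ^ (n + m))"
proof -
  have "tw_in (of_nat (n + m choose k) * x ^ k * y ^ (n + m - k))" for k
  proof (cases "n \<le> k")
    case True
    then show ?thesis
      using tw_in_mult tw_in_power_mono[OF assms(1)] by (metis mult.commute mult.assoc)
  next
    case False
    then show ?thesis
      using tw_in_mult tw_in_power_mono[OF assms(2)] by simp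
  qed
  then show ?thesis
    by (simp add: binomial_ring tw_in_sum)
qed

lemma tw_rad_add: "tw_rad x \<Longrightarrow> tw_rad y \<Longrightarrow> tw_rad (x + y)"
proof -
  assume "tw_rad x" "tw_rad y"
  then obtain c n d m where "n \<ge> 1" "tw_in ((x + TW c c) ^ n)" "tw_in ((y + TW d d) ^ m)"
    unfolding tw_rad_def by blast
  then have "n + m \<ge> 1" "tw_in ((x + y + TW (c + d) (c + d)) ^ (n + m))"
    using tw_in_power_add[of "x + TW c c" n "y + TW d d" m] by (simp_all add: ac_simps)
  then show ?thesis
    unfolding tw_rad_def by blast
qed

lemma tw_rad_mult: "tw_rad x \<Longrightarrow> tw_rad (z * x)"
proof -
  assume "tw_rad x"
  then obtain c n where n: "n \<ge> 1" "tw_in ((x + TW c c) ^ n)"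
    unfolding tw_rad_def by blast
  define e where "e = (tfst z + tsnd z) * c"
  have "z ^ n * (x + TW c c) ^ n = (z * x + TW e e) ^ n"
    by (cases z) (simp add: e_def power_mult_distrib[symmetric] algebra_simps)
  then show ?thesis
    unfolding tw_rad_def using n tw_in_mult by metis
qed

lemma tw_rad_cancel_diag: "tw_rad (x + TW d d) \<Longrightarrow> tw_rad x"
  unfolding tw_rad_def by (metis add.assoc tw_plus)

lemma tw_rad_diag: "tw_rad (TW a a)"
  unfolding tw_rad_def using tw_in_diag by (metis le_refl power_one_right tw_plus)

text \<open>Multiplication by \<open>TW 0 1\<close> swaps the components.\<close>

lemma tw_rad_swap: "tw_rad (TW a b) \<Longrightarrow> tw_rad (TW b a)"
  using tw_rad_mult[of "TW a b" "TW 0 1"] by simp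

lemma tw_rad_trans: "tw_rad (TW a b) \<Longrightarrow> tw_rad (TW b c) \<Longrightarrow> tw_rad (TW a c)"
  using tw_rad_add[of "TW a b" "TW b c"] tw_rad_cancel_diag[of "TW a c" b] by (simp add: ac_simps)

lemma tw_rad_mult_components:
  assumes "tw_rad (TW a b)" "tw_rad (TW c d)"
  shows "tw_rad (TW (a * c) (b * d))"
proof -
  have "tw_rad (TW a 0 * TW c d + TW d 0 * TW a b)"
    using assms by (intro tw_rad_add tw_rad_mult)
  also have "TW a 0 * TW c d + TW d 0 * TW a b = TW (a * c) (b * d) + TW (a * d) (a * d)"
    by (simp add: ac_simps)
  finally show ?thesis
    by (rule tw_rad_cancel_diag)
qed

lemma congruence_cong_rad: "congruence UNIV (cong_rad UNIV \<rho>)"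
  unfolding congruence_def
  using tw_rad_add[of "TW _ _" "TW _ _"]
  by (auto simp: cong_rad_iff_tw_rad refl_on_def sym_def trans_def
      intro: tw_rad_diag tw_rad_swap tw_rad_trans tw_rad_mult_components)

end

subsection \<open>Evaluation of polynomials\<close>

definition mon_eval :: "(nat \<Rightarrow>\<^sub>0 nat) \<Rightarrow> (nat \<Rightarrow> 'b::comm_semiring_1) \<Rightarrow> 'b" where
  "mon_eval m P = (\<Prod>i\<in>Poly_Mapping.keys m. P i ^ Poly_Mapping.lookup m i)"

lemma peval_eq_sum_mon_eval:
  "peval p P = (\<Sum>m\<in>Poly_Mapping.keys p. Poly_Mapping.lookup p m * mon_eval m P)"
  by (simp add: peval_def mon_eval_def)

lemma peval_eq_sum_superset:
  "finite U \<Longrightarrow> Poly_Mapping.keys p \<subseteq> U \<Longrightarrow>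
    peval p P = (\<Sum>m\<in>U. Poly_Mapping.lookup p m * mon_eval m P)"
  unfolding peval_eq_sum_mon_eval by (rule sum.mono_neutral_cong_left) (auto simp: in_keys_iff)

lemma mon_eval_eq_prod_superset:
  "finite U \<Longrightarrow> Poly_Mapping.keys m \<subseteq> U \<Longrightarrow>
    mon_eval m P = (\<Prod>i\<in>U. P i ^ Poly_Mapping.lookup m i)"
  unfolding mon_eval_def by (rule prod.mono_neutral_cong_left) (auto simp: in_keys_iff)

lemma mon_eval_add: "mon_eval (m1 + m2) P = mon_eval m1 P * mon_eval m2 P"
proof -
  let ?U = "Poly_Mapping.keys m1 \<union> Poly_Mapping.keys m2"
  have "mon_eval (m1 + m2) P = (\<Prod>i\<in>?U. P i ^ Poly_Mapping.lookup m1 i * P i ^ Poly_Mapping.lookup m2 i)"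
    using keys_add[of m1 m2] by (simp add: mon_eval_eq_prod_superset[of ?U] lookup_add power_add)
  also have "\<dots> = mon_eval m1 P * mon_eval m2 P"
    by (simp add: prod.distrib mon_eval_eq_prod_superset[of ?U])
  finally show ?thesis .
qed

lemma peval_add: "peval (p + q) P = peval p P + peval q P"
  unfolding peval_eq_sum_mon_eval by (rule setsum_keys_plus_distrib) (auto simp: distrib_right)

lemma peval_zero [simp]: "peval 0 P = 0"
  by (simp add: peval_def)

lemma peval_sum: "peval (sum f I) P = (\<Sum>i\<in>I. peval (f i) P)"
  by (induction I rule: infinite_finite_induct) (auto simp: peval_add)

lemma peval_single: "peval (Poly_Mapping.single m c) P = c * mon_eval m P"
  by (simp add: peval_eq_sum_mon_eval)

lemma poly_mapping_eq_sum_single: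
  "p = (\<Sum>m\<in>Poly_Mapping.keys p. Poly_Mapping.single m (Poly_Mapping.lookup p m))"
  by (rule poly_mapping_eqI)
     (auto simp: lookup_sum lookup_single when_def in_keys_iff sum.delta)

lemma peval_mult: "peval (p * q) P = peval p P * peval (q :: 'b::comm_semiring_1 mpoly) P"
proof -
  let ?a = "Poly_Mapping.lookup p" and ?b = "Poly_Mapping.lookup q"
  have "p * q = (\<Sum>m\<in>Poly_Mapping.keys p. \<Sum>m'\<in>Poly_Mapping.keys q.
      Poly_Mapping.single (m + m') (?a m * ?b m'))"
    by (subst poly_mapping_eq_sum_single[of p], subst poly_mapping_eq_sum_single[of q])
       (simp add: sum_product mult_single)
  then have "peval (p * q) P = (\<Sum>m\<in>Poly_Mapping.keys p. \<Sum>m'\<in>Poly_Mapping.keys q.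
      (?a m * mon_eval m P) * (?b m' * mon_eval m' P))"
    by (simp add: peval_sum peval_single mon_eval_add ac_simps)
  then show ?thesis
    by (simp add: peval_eq_sum_mon_eval sum_product)
qed

lemma peval_one: "peval (1 :: 'b::comm_semiring_1 mpoly) P = 1"
  using peval_single[of 0 "1::'b" P] by (simp add: mon_eval_def)

lemma peval_twpow:
  "twpow (peval (fst x) P, peval (snd x) P) n = (peval (fst (twpow x n)) P, peval (snd (twpow x n)) P)"
  by (induction x n rule: twpow.induct) (auto simp: twisted_def peval_add peval_mult peval_one)

lemma peval_coeff_cong:
  assumes "congruence UNIV \<theta>" "coeff_cong f g \<theta>"
  shows "(peval f P, peval g P) \<in> \<theta>"
proof -
  let ?U = "Poly_Mapping.keys f \<union> Poly_Mapping.keys g"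
  have "(\<Sum>m\<in>?U. Poly_Mapping.lookup f m * mon_eval m P, \<Sum>m\<in>?U. Poly_Mapping.lookup g m * mon_eval m P) \<in> \<theta>"
    using assms congruence_refl[OF assms(1)]
    by (intro congruence_sum[OF assms(1)] congruence_mult[OF assms(1)]) (auto simp: coeff_cong_def)
  then show ?thesis
    by (simp add: peval_eq_sum_superset[of ?U])
qed

subsection \<open>The congruence of a set of points\<close>

lemma congruence_cong_of_points:
  assumes "congruence UNIV \<theta>"
    and closed: "\<And>f g. f \<in> polys n A \<Longrightarrow> g \<in> polys n A \<Longrightarrow> f + g \<in> polys n A \<and> f * g \<in> polys n A"
  shows "congruence (polys n A) (cong_of_points n A \<theta> Y)"
  unfolding congruence_def
proof (intro conjI allI impI)
  let ?T = "cong_of_points n A \<theta> Y"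
  note \<theta> = congruence_refl[OF assms(1)] congruence_sym[OF assms(1)] congruence_trans[OF assms(1)]
    congruence_add[OF assms(1)] congruence_mult[OF assms(1)]
  show "?T \<subseteq> polys n A \<times> polys n A" "refl_on (polys n A) ?T" "sym ?T" "trans ?T"
    unfolding cong_of_points_def refl_on_def sym_def trans_def by (blast intro: \<theta>)+
  fix f g f' g'
  assume "(f, g) \<in> ?T" "(f', g') \<in> ?T"
  then show "(f + f', g + g') \<in> ?T" "(f * f', g * g') \<in> ?T"
    unfolding cong_of_points_def using closed by (auto simp: peval_add peval_mult intro: \<theta>)
qed

lemma peval_cong_rad_zero_locus:
  assumes "(g1, g2) \<in> cong_rad C \<sigma>" "P \<in> zero_locus n \<rho> \<sigma>"
  shows "(peval g1 P, peval g2 P) \<in> cong_rad UNIV \<rho>"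
proof -
  obtain h k where "k \<ge> 1" "twpow (g1 + h, g2 + h) k \<in> \<sigma>"
    using assms(1) unfolding cong_rad_def by blast
  then have "twpow (peval (g1 + h) P, peval (g2 + h) P) k \<in> \<rho>"
    using assms(2) peval_twpow[of "(g1 + h, g2 + h)" P k]
    by (cases "twpow (g1 + h, g2 + h) k") (auto simp: zero_locus_def)
  then show ?thesis
    using \<open>k \<ge> 1\<close> by (auto simp: cong_rad_def peval_add)
qed

lemma rad_quot_subset_cong_of_points:
  assumes "congruence UNIV \<rho>"
  shows "rad_quot n A \<sigma> \<rho> \<subseteq> cong_of_points n A (cong_rad UNIV \<rho>) (zero_locus n \<rho> \<sigma>)"
proof (clarify)
  let ?K = "cong_rad UNIV \<rho>"
  have K: "congruence UNIV ?K"
    using assms by (rule congruence_cong_rad)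
  fix f1 f2
  assume "(f1, f2) \<in> rad_quot n A \<sigma> \<rho>"
  then obtain g1 g2 where f: "f1 \<in> polys n A" "f2 \<in> polys n A"
    and g: "(g1, g2) \<in> cong_rad (polys n A) \<sigma>"
    and coeffs: "coeff_cong f1 g1 ?K" "coeff_cong f2 g2 ?K"
    unfolding rad_quot_def by blast
  have "(peval f1 P, peval f2 P) \<in> ?K" if P: "P \<in> zero_locus n \<rho> \<sigma>" for P
  proof -
    have "(peval f1 P, peval g1 P) \<in> ?K" "(peval f2 P, peval g2 P) \<in> ?K"
      using coeffs by (simp_all add: peval_coeff_cong[OF K])
    moreover have "(peval g1 P, peval g2 P) \<in> ?K"
      using g P by (rule peval_cong_rad_zero_locus)
    ultimately show ?thesis
      by (meson K congruence_sym congruence_trans)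
  qed
  with f show "(f1, f2) \<in> cong_of_points n A ?K (zero_locus n \<rho> \<sigma>)"
    unfolding cong_of_points_def by blast
qed

theorem proposition3p9:
  fixes A :: "'b::{comm_semiring_1,zero_neq_one} set"
    and n :: nat
    and \<rho> :: "('b \<times> 'b) set"
    and \<sigma> :: "('b mpoly \<times> 'b mpoly) set"
  assumes "subsemiring A"
    and "congruence (UNIV :: 'b set) \<rho>"
    and "congruence (polys n A) \<sigma>"
  shows "cong_gen (polys n A) (rad_quot n A \<sigma> \<rho>)
           \<subseteq> cong_of_points n A (cong_rad UNIV \<rho>) (zero_locus n \<rho> \<sigma>)"
proof (rule cong_gen_least)
  show "congruence (polys n A) (cong_of_points n A (cong_rad UNIV \<rho>) (zero_locus n \<rho> \<sigma>))"
    using congruence_cong_rad[OF assms(2)] congruence_carrier_closed[OF assms(3)]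
    by (rule congruence_cong_of_points)
  show "rad_quot n A \<sigma> \<rho> \<subseteq> cong_of_points n A (cong_rad UNIV \<rho>) (zero_locus n \<rho> \<sigma>)"
    using assms(2) by (rule rad_quot_subset_cong_of_points)
qed

end
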